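(* Let $p$ be a prime and $(K,|\cdot|)$ an ultrametric field of residue characteristic $p$. Let $\lambda\in K$ with $|\lambda|=1$ such that the order $q$ of $\widetilde\lambda$ in $\widetilde K^*$ is finite, and let $f(z)=\lambda z+\cdots\in\mathcal{O}_K[[z]]$. (1) Suppose $\lambda^q\ne1$ and let $w_0$ be a periodic point of $f$ of minimal period $q$ (with $w_0\ne0$ if $q=1$). Then $|w_0|\ge|\lambda^q-1|^{1/q}$, with equality if and only if $\mathrm{wideg}(f^q(z)-z)=q+1$. Moreover, if equality holds, then the cycle containing $w_0$ is the only cycle of minimal period $q$ of $f$ in $\mathfrak{m}_K\setminus\{0\}$, and every point $w_0'$ of this cycle satisfies $|w_0'|=|\lambda^q-1|^{1/q}$. (2) Let $n\ge1$ be an integer with $\lambda^{qp^n}\ne1$ and let $z_0$ be a periodic point of $f$ of minimal period $qp^n$. Then $|z_0|\ge\left|\frac{\lambda^{qp^n}-1}{\lambda^{qp^{n-1}}-1}\right|^{1/(qp^n)}$, with equality if and only if $\mathrm{wideg}\left(\frac{f^{qp^n}(z)-z}{f^{qp^{n-1}}(z)-z}\right)=qp^n$. Moreover, if equality holds, then the cycle containing $z_0$ is the only cycle of minimal period $qp^n$ of $f$, and every point $z_0'$ in this cycle satisfies the equality with $z_0$ replaced by $z_0'$.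
   Context: $\mathcal{O}_K=\{|z|\le1\}$, $\mathfrak{m}_K=\{|z|<1\}$, $\widetilde K=\mathcal{O}_K/\mathfrak{m}_K$. Periodic points are taken in $\mathfrak{m}_K$, which $f$ maps to itself. For $h\in\mathcal{O}_K[[z]]$, the Weierstrass degree $\mathrm{wideg}(h)$ is the order (lowest degree of a nonzero term, $+\infty$ for $0$) of the reduction $\widetilde h\in\widetilde K[[\zeta]]$. The power series $f^{qp^{n-1}}(z)-z$ divides $f^{qp^n}(z)-z$ in $\mathcal{O}_K[[z]]$, so the quotient above lies in $\mathcal{O}_K[[z]]$. *)

theory Defs
  imports Complex_Main "HOL-Computational_Algebra.Formal_Power_Series" "HOL-Library.Extended_Nat"
begin

definition ultrametric_abs :: "('a::field \<Rightarrow> real) \<Rightarrow> bool" where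
  "ultrametric_abs av \<longleftrightarrow>
     (\<forall>x. av x \<ge> 0) \<and> (\<forall>x. av x = 0 \<longleftrightarrow> x = 0) \<and>
     (\<forall>x y. av (x * y) = av x * av y) \<and>
     (\<forall>x y. av (x + y) \<le> max (av x) (av y))"

definition av_complete :: "('a::field \<Rightarrow> real) \<Rightarrow> bool" where
  "av_complete av \<longleftrightarrow>
     (\<forall>s::nat \<Rightarrow> 'a. (\<forall>e>0. \<exists>N. \<forall>m\<ge>N. \<forall>n\<ge>N. av (s m - s n) < e) \<longrightarrow>
        (\<exists>x. (\<lambda>n. av (s n - x)) \<longlonglongrightarrow> 0))"

definition ps_eval :: "('a::field \<Rightarrow> real) \<Rightarrow> 'a fps \<Rightarrow> 'a \<Rightarrow> 'a" where
  "ps_eval av f z = (THE x. (\<lambda>N. av ((\<Sum>i<N. fps_nth f i * z ^ i) - x)) \<longlonglongrightarrow> 0)"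

definition fps_iter :: "'a::field fps \<Rightarrow> nat \<Rightarrow> 'a fps" where
  "fps_iter f n = ((\<lambda>g. fps_compose g f) ^^ n) fps_X"

text \<open>Weierstrass degree: order of the reduction mod m_K, i.e. the least index of a
  coefficient of absolute value 1 (infinity if there is none).\<close>
definition wideg :: "('a::field \<Rightarrow> real) \<Rightarrow> 'a fps \<Rightarrow> enat" where
  "wideg av h = (if \<exists>n. av (fps_nth h n) = 1 then enat (LEAST n. av (fps_nth h n) = 1) else \<infinity>)"

definition min_periodic :: "('a::field \<Rightarrow> real) \<Rightarrow> 'a fps \<Rightarrow> 'a \<Rightarrow> nat \<Rightarrow> bool" where
  "min_periodic av f w n \<longleftrightarrow> av w < 1 \<and> 0 < n \<and> (ps_eval av f ^^ n) w = w \<and>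
     (\<forall>k. 0 < k \<and> k < n \<longrightarrow> (ps_eval av f ^^ k) w \<noteq> w)"

definition cycle_of :: "('a::field \<Rightarrow> real) \<Rightarrow> 'a fps \<Rightarrow> 'a \<Rightarrow> 'a set" where
  "cycle_of av f w = range (\<lambda>k. (ps_eval av f ^^ k) w)"

end

(*
  If h \<in> O_K[[z]] vanishes on a cycle C of N points of the open unit disc, repeated division by
  linear factors z - c (which stays integral because |c| < 1) gives h = (\<Prod>c\<in>C. z - c) * G with
  G integral.  Since |f'(0)| = 1, f is an isometry of the disc, so all points of C have the
  absolute value |w0|; hence |h(0)| = |w0|^N |G(0)| \<le> |w0|^N, with equality iff G(0) is a unit,
  i.e. iff wideg h = N, and then G has no zeros in the disc, so C is the whole zero set of h there.
  Part (1) applies this to h = (f^q(z) - z)/z, with h(0) = \<lambda>^q - 1; part (2) to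
  h = (f^(qp^n)(z) - z)/(f^(qp^(n-1))(z) - z), with h(0) = (\<lambda>^(qp^n) - 1)/(\<lambda>^(qp^(n-1)) - 1).
*)
theory Submission
  imports Defs
begin

unbundle fps_syntax

lemma powr_inverse_eq_iff:
  fixes r x :: real
  assumes "0 < r" "0 < N" "0 \<le> x"
  shows "r = x powr (1 / real N) \<longleftrightarrow> x = r ^ N"
proof
  assume r: "r = x powr (1 / real N)"
  then have "x \<noteq> 0"
    using assms(1) by auto
  then have "r ^ N = x powr (real N * (1 / real N))"
    unfolding r using assms(3) by (simp add: powr_realpow[symmetric] powr_powr mult.commute)
  then show "x = r ^ N"
    using assms(2) \<open>x \<noteq> 0\<close> assms(3) by simp
next
  assume "x = r ^ N"
  then show "r = x powr (1 / real N)"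
    using assms(1,2) by (simp add: powr_realpow[symmetric] powr_powr)
qed

lemma fps_iter_0 [simp]: "fps_iter f 0 = fps_X"
  by (simp add: fps_iter_def)

lemma fps_iter_Suc: "fps_iter f (Suc n) = fps_iter f n oo f"
  by (simp add: fps_iter_def)

lemma fps_iter_nth_0: "f $ 0 = 0 \<Longrightarrow> fps_iter f n $ 0 = 0"
  by (induction n) (simp_all add: fps_iter_Suc)

lemma fps_compose_nth_1: "(g oo f) $ Suc 0 = g $ Suc 0 * (f $ Suc 0 :: 'a::comm_ring_1)"
  by (simp add: fps_compose_nth)

lemma fps_iter_nth_1: "f $ 0 = 0 \<Longrightarrow> fps_iter f n $ 1 = (f $ 1 :: 'a::field) ^ n"
  by (induction n) (simp_all add: fps_iter_Suc fps_compose_nth_1 mult.commute)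

lemma fps_iter_add: "f $ 0 = 0 \<Longrightarrow> fps_iter f (m + n) = fps_iter f m oo fps_iter f n"
proof (induction n)
  case (Suc n)
  have "fps_iter f (m + Suc n) = (fps_iter f m oo fps_iter f n) oo f"
    using Suc by (simp add: fps_iter_Suc)
  also have "\<dots> = fps_iter f m oo (fps_iter f n oo f)"
    using fps_compose_assoc[of f "fps_iter f n" "fps_iter f m"] Suc.prems fps_iter_nth_0 by metis
  finally show ?case
    by (simp add: fps_iter_Suc)
qed simp

lemma fps_iter_mult: "f $ 0 = 0 \<Longrightarrow> fps_iter f (m * k) = fps_iter (fps_iter f m) k"
proof (induction k)
  case (Suc k)
  then show ?case
    using fps_iter_add[of f "m * k" m] by (simp add: fps_iter_Suc add.commute)
qed simp

lemma fps_eq_const_plus_X_mult_shift: "a = fps_const (a $ 0) + fps_X * fps_shift 1 (a :: 'a::comm_ring_1 fps)"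
proof (rule fps_ext)
  fix n
  show "a $ n = (fps_const (a $ 0) + fps_X * fps_shift 1 a) $ n"
    by (cases n) simp_all
qed

section \<open>Ultrametric absolute values\<close>

locale ultrametric_field =
  fixes av :: "'a::field \<Rightarrow> real"
  assumes ultrametric: "ultrametric_abs av"
begin

lemma av_nonneg [simp]: "0 \<le> av x"
  using ultrametric by (simp add: ultrametric_abs_def)

lemma av_eq_0_iff [simp]: "av x = 0 \<longleftrightarrow> x = 0"
  using ultrametric by (simp add: ultrametric_abs_def)

lemma av_mult [simp]: "av (x * y) = av x * av y"
  using ultrametric by (simp add: ultrametric_abs_def)

lemma av_add_le: "av (x + y) \<le> max (av x) (av y)"
  using ultrametric by (simp add: ultrametric_abs_def)

lemma av_0 [simp]: "av 0 = 0"
  by simp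

lemma av_pos_iff [simp]: "0 < av x \<longleftrightarrow> x \<noteq> 0"
  using av_nonneg[of x] av_eq_0_iff[of x] by linarith

lemma av_1 [simp]: "av 1 = 1"
  using av_mult[of 1 1] av_eq_0_iff[of 1] by (metis mult_cancel_left1 one_neq_zero)

lemma av_uminus [simp]: "av (- x) = av x"
proof -
  have "av (- 1) ^ 2 = 1 ^ 2"
    using av_mult[of "- 1" "- 1"] by (simp add: power2_eq_square)
  then have "av (- 1) = 1"
    using power2_eq_imp_eq[of "av (- 1)" 1] by simp
  then show ?thesis
    using av_mult[of "- 1" x] by simp
qed

lemma av_diff_le: "av (x - y) \<le> max (av x) (av y)"
  using av_add_le[of x "- y"] by simp

lemma av_diff_commute: "av (x - y) = av (y - x)"
  by (metis minus_diff_eq av_uminus)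

lemma av_power [simp]: "av (x ^ n) = av x ^ n"
  by (induction n) auto

lemma av_prod: "av (prod g A) = (\<Prod>i\<in>A. av (g i))"
  by (induction A rule: infinite_finite_induct) auto

lemma av_sum_le: "(\<And>i. i \<in> A \<Longrightarrow> av (g i) \<le> c) \<Longrightarrow> 0 \<le> c \<Longrightarrow> av (sum g A) \<le> c"
proof (induction A rule: infinite_finite_induct)
  case (insert x F)
  then show ?case
    using av_add_le[of "g x" "sum g F"] by (simp add: max.bounded_iff order_trans)
qed auto

lemma av_add_eq_dominant: "av x < av y \<Longrightarrow> av (x + y) = av y"
  using av_add_le[of x y] av_diff_le[of "x + y" x] by auto

section \<open>Integral power series and Weierstrass degree\<close>

definition integral_fps :: "'a fps \<Rightarrow> bool" where
  "integral_fps g \<longleftrightarrow> (\<forall>i. av (g $ i) \<le> 1)"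

lemma integral_fpsD: "integral_fps g \<Longrightarrow> av (g $ i) \<le> 1"
  by (simp add: integral_fps_def)

lemma integral_fps_add: "integral_fps a \<Longrightarrow> integral_fps b \<Longrightarrow> integral_fps (a + b)"
  unfolding integral_fps_def by (metis fps_add_nth max.bounded_iff av_add_le order_trans)

lemma integral_fps_diff: "integral_fps a \<Longrightarrow> integral_fps b \<Longrightarrow> integral_fps (a - b)"
  unfolding integral_fps_def by (metis fps_sub_nth max.bounded_iff av_diff_le order_trans)

lemma integral_fps_mult: "integral_fps a \<Longrightarrow> integral_fps b \<Longrightarrow> integral_fps (a * b)"
  unfolding integral_fps_def fps_mult_nth by (intro allI av_sum_le) (auto intro: mult_le_one)

lemma integral_fps_1 [simp]: "integral_fps 1"
  and integral_fps_0 [simp]: "integral_fps 0"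
  and integral_fps_X [simp]: "integral_fps fps_X"
  by (simp_all add: integral_fps_def fps_X_def)

lemma integral_fps_power: "integral_fps a \<Longrightarrow> integral_fps (a ^ n)"
  by (induction n) (simp_all add: integral_fps_mult)

lemma integral_fps_const: "av c \<le> 1 \<Longrightarrow> integral_fps (fps_const c)"
  by (simp add: integral_fps_def)

lemma integral_fps_shift: "integral_fps a \<Longrightarrow> integral_fps (fps_shift n a)"
  by (simp add: integral_fps_def)

lemma integral_fps_compose: "integral_fps a \<Longrightarrow> integral_fps b \<Longrightarrow> integral_fps (a oo b)"
  unfolding integral_fps_def fps_compose_nth
  using integral_fps_power[of b] by (auto simp: integral_fps_def intro!: av_sum_le mult_le_one)

lemma integral_fps_iter: "integral_fps f \<Longrightarrow> integral_fps (fps_iter f n)"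
  by (induction n) (simp_all add: fps_iter_def integral_fps_compose)

lemma integral_fps_X_minus_const: "av c \<le> 1 \<Longrightarrow> integral_fps (fps_X - fps_const c)"
  by (intro integral_fps_diff integral_fps_X integral_fps_const)

definition has_wideg :: "'a fps \<Rightarrow> nat \<Rightarrow> bool" where
  "has_wideg g d \<longleftrightarrow> av (g $ d) = 1 \<and> (\<forall>j<d. av (g $ j) < 1)"

lemma wideg_eq_enat_iff:
  assumes "integral_fps g"
  shows "wideg av g = enat d \<longleftrightarrow> has_wideg g d"
proof
  assume wd: "wideg av g = enat d"
  then have ex: "\<exists>n. av (g $ n) = 1"
    unfolding wideg_def by (auto split: if_splits)
  with wd have d: "d = (LEAST n. av (g $ n) = 1)"
    unfolding wideg_def by auto
  have "av (g $ j) < 1" if "j < d" for j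
    using not_less_Least[OF that[unfolded d]] integral_fpsD[OF assms, of j] by linarith
  then show "has_wideg g d"
    unfolding has_wideg_def using LeastI_ex[OF ex] d by blast
next
  assume wd: "has_wideg g d"
  then have "(LEAST n. av (g $ n) = 1) = d"
    unfolding has_wideg_def by (intro Least_equality) (auto simp: not_less[symmetric])
  with wd show "wideg av g = enat d"
    unfolding wideg_def has_wideg_def by auto
qed

lemma has_wideg_Suc_iff_shift: "av (g $ 0) < 1 \<Longrightarrow> has_wideg g (Suc d) \<longleftrightarrow> has_wideg (fps_shift 1 g) d"
  unfolding has_wideg_def by (auto simp: less_Suc_eq_0_disj)

lemma has_wideg_X_minus_const_mult:
  assumes h: "integral_fps h" and c: "av c < 1"
  shows "has_wideg ((fps_X - fps_const c) * h) (Suc d) \<longleftrightarrow> has_wideg h d"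
proof -
  let ?g = "(fps_X - fps_const c) * h"
  have small: "av (c * h $ j) < 1" for j
  proof -
    have "av c * av (h $ j) \<le> av c"
      by (rule mult_left_le[OF integral_fpsD[OF h] av_nonneg])
    then show ?thesis
      using c by simp
  qed
  have g0: "av (?g $ 0) < 1"
    using small[of 0] by simp
  have g_Suc: "?g $ Suc k = h $ k + - (c * h $ Suc k)" for k
    by (simp add: algebra_simps)
  have h_eq: "h $ k = ?g $ Suc k + c * h $ Suc k" for k
    by (simp add: algebra_simps)
  have less_iff: "av (?g $ Suc k) < 1 \<longleftrightarrow> av (h $ k) < 1" for k
    using av_add_le[of "h $ k" "- (c * h $ Suc k)"] av_add_le[of "?g $ Suc k" "c * h $ Suc k"]
      small[of "Suc k"] unfolding g_Suc[of k] by (metis h_eq av_uminus g_Suc max_less_iff_conj order.strict_trans1)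
  have eq_iff: "av (?g $ Suc k) = 1 \<longleftrightarrow> av (h $ k) = 1" for k
    using av_add_eq_dominant[of "c * h $ Suc k" "?g $ Suc k"]
      av_add_eq_dominant[of "- (c * h $ Suc k)" "h $ k"] small[of "Suc k"] h_eq[of k] g_Suc[of k]
    by (metis add.commute av_uminus)
  show ?thesis
    unfolding has_wideg_def using g0 less_iff eq_iff by (auto simp: less_Suc_eq_0_disj)
qed

section \<open>Evaluation of integral power series on the open unit disc\<close>

abbreviation partial_sum :: "'a fps \<Rightarrow> 'a \<Rightarrow> nat \<Rightarrow> 'a" where
  "partial_sum g z N \<equiv> (\<Sum>i<N. g $ i * z ^ i)"

lemma av_tendsto_0_le:
  assumes "\<And>N. av (u N) \<le> b N" "b \<longlonglongrightarrow> 0"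
  shows "(\<lambda>N. av (u N)) \<longlonglongrightarrow> 0"
  by (rule real_tendsto_sandwich[of "\<lambda>_. 0" _ sequentially b]) (use assms in auto)

lemma av_tendsto_0_add:
  assumes "(\<lambda>N. av (u N)) \<longlonglongrightarrow> 0" "(\<lambda>N. av (v N)) \<longlonglongrightarrow> 0"
  shows "(\<lambda>N. av (u N + v N)) \<longlonglongrightarrow> 0"
proof (rule av_tendsto_0_le)
  show "av (u N + v N) \<le> av (u N) + av (v N)" for N
    using av_add_le[of "u N" "v N"] av_nonneg[of "u N"] av_nonneg[of "v N"] by linarith
  show "(\<lambda>N. av (u N) + av (v N)) \<longlonglongrightarrow> 0"
    using tendsto_add[OF assms] by simp
qed

lemma av_tendsto_0_cmult: "(\<lambda>N. av (u N)) \<longlonglongrightarrow> 0 \<Longrightarrow> (\<lambda>N. av (c * u N)) \<longlonglongrightarrow> 0"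
  using tendsto_mult_right_zero[of "\<lambda>N. av (u N)" sequentially "av c"] by simp

lemma av_limit_unique:
  assumes "(\<lambda>N. av (s N - x)) \<longlonglongrightarrow> 0" "(\<lambda>N. av (s N - y)) \<longlonglongrightarrow> 0"
  shows "x = y"
proof -
  have "(\<lambda>N. av (x - s N)) \<longlonglongrightarrow> 0"
    using assms(1) by (simp add: av_diff_commute)
  from av_tendsto_0_add[OF assms(2) this] show ?thesis
    by (simp add: LIMSEQ_const_iff)
qed

lemma ps_eval_eqI: "(\<lambda>N. av (partial_sum g z N - x)) \<longlonglongrightarrow> 0 \<Longrightarrow> ps_eval av g z = x"
  unfolding ps_eval_def using av_limit_unique by (intro the_equality) auto

lemma ps_eval_eventually_eqI: "(\<And>N. N \<ge> K \<Longrightarrow> partial_sum g z N = x) \<Longrightarrow> ps_eval av g z = x"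
  by (intro ps_eval_eqI tendsto_eventually) (auto simp: eventually_sequentially)

lemma av_partial_sum_diff_le:
  assumes "integral_fps g" "av z \<le> 1" "n \<le> m"
  shows "av (partial_sum g z m - partial_sum g z n) \<le> av z ^ n"
proof -
  have "av (g $ i * z ^ i) \<le> av z ^ n" if "i \<in> {n..<m}" for i
    using that assms mult_mono[of "av (g $ i)" 1 "av z ^ i" "av z ^ n"] integral_fpsD[of g i]
      power_decreasing[of n i "av z"] by simp
  then have "av (\<Sum>i\<in>{n..<m}. g $ i * z ^ i) \<le> av z ^ n"
    by (intro av_sum_le) auto
  moreover have "partial_sum g z m = partial_sum g z n + (\<Sum>i\<in>{n..<m}. g $ i * z ^ i)"
    using assms(3) by (metis atLeast0LessThan le0 sum.atLeastLessThan_concat)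
  ultimately show ?thesis
    by simp
qed

lemma ps_eval_X: "ps_eval av fps_X z = z"
proof (rule ps_eval_eventually_eqI[of 2])
  fix N :: nat
  assume "N \<ge> 2"
  have "partial_sum fps_X z N = (\<Sum>i<N. if i = 1 then z else 0)"
    by (intro sum.cong) auto
  with \<open>N \<ge> 2\<close> show "partial_sum fps_X z N = z"
    by simp
qed

lemma ps_eval_const: "ps_eval av (fps_const c) z = c"
proof (rule ps_eval_eventually_eqI[of 1])
  fix N :: nat
  assume "N \<ge> 1"
  have "partial_sum (fps_const c) z N = (\<Sum>i<N. if i = 0 then c else 0)"
    by (intro sum.cong) auto
  with \<open>N \<ge> 1\<close> show "partial_sum (fps_const c) z N = c"
    by simp
qed

lemma ps_eval_at_0: "ps_eval av g 0 = g $ 0"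
proof (rule ps_eval_eventually_eqI[of 1])
  fix N :: nat
  assume "N \<ge> 1"
  have "partial_sum g 0 N = (\<Sum>i<N. if i = 0 then g $ 0 else 0)"
    by (intro sum.cong) auto
  with \<open>N \<ge> 1\<close> show "partial_sum g 0 N = g $ 0"
    by simp
qed

lemma ps_eval_1: "ps_eval av 1 z = 1"
  using ps_eval_const[of 1 z] by simp

end

locale complete_ultrametric_field = ultrametric_field +
  assumes complete: "av_complete av"
begin

lemma partial_sum_Cauchy:
  assumes g: "integral_fps g" and z: "av z < 1" and e: "0 < e"
  shows "\<exists>N. \<forall>m\<ge>N. \<forall>n\<ge>N. av (partial_sum g z m - partial_sum g z n) < e"
proof -
  obtain N where N: "av z ^ N < e"
    using real_arch_pow_inv[OF e z] by auto
  have "av (partial_sum g z m - partial_sum g z n) < e" if "N \<le> n" "n \<le> m" for m n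
  proof -
    have "av (partial_sum g z m - partial_sum g z n) \<le> av z ^ n"
      using av_partial_sum_diff_le[OF g _ that(2)] z by simp
    also have "\<dots> \<le> av z ^ N"
      using power_decreasing[OF that(1), of "av z"] z by simp
    finally show ?thesis
      using N by linarith
  qed
  then show ?thesis
    by (metis av_diff_commute nle_le)
qed

lemma ps_eval_tendsto:
  assumes g: "integral_fps g" and z: "av z < 1"
  shows "(\<lambda>N. av (partial_sum g z N - ps_eval av g z)) \<longlonglongrightarrow> 0"
proof -
  have "\<forall>e>0. \<exists>N. \<forall>m\<ge>N. \<forall>n\<ge>N. av (partial_sum g z m - partial_sum g z n) < e"
    using partial_sum_Cauchy[OF g z] by blast
  then obtain x where "(\<lambda>N. av (partial_sum g z N - x)) \<longlonglongrightarrow> 0"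
    using spec[OF complete[unfolded av_complete_def], of "partial_sum g z"] by blast
  with ps_eval_eqI show ?thesis
    by simp
qed

lemma av_ps_eval_minus_partial_sum_le:
  assumes g: "integral_fps g" and z: "av z < 1"
  shows "av (ps_eval av g z - partial_sum g z N) \<le> av z ^ N"
proof (rule ccontr)
  let ?x = "ps_eval av g z" and ?S = "partial_sum g z"
  assume "\<not> ?thesis"
  then have gap: "av z ^ N < av (?x - ?S N)"
    by simp
  moreover have "0 \<le> av z ^ N"
    by simp
  ultimately have "\<forall>\<^sub>F m in sequentially. av (?S m - ?x) < av (?x - ?S N)"
    by (intro order_tendstoD(2)[OF ps_eval_tendsto[OF g z]]) linarith
  then obtain m where m: "N \<le> m" "av (?S m - ?x) < av (?x - ?S N)"
    unfolding eventually_sequentially by (metis nle_le)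
  have "?x - ?S N = (?S m - ?S N) - (?S m - ?x)"
    by simp
  then have "av (?x - ?S N) \<le> max (av (?S m - ?S N)) (av (?S m - ?x))"
    using av_diff_le by metis
  moreover have "av (?S m - ?S N) \<le> av z ^ N"
    using av_partial_sum_diff_le[OF g _ m(1)] z by simp
  ultimately show False
    using gap m(2) by linarith
qed

lemma av_ps_eval_le_1: "integral_fps g \<Longrightarrow> av z < 1 \<Longrightarrow> av (ps_eval av g z) \<le> 1"
  using av_ps_eval_minus_partial_sum_le[of g z 0] by simp

lemma av_ps_eval_le: "integral_fps g \<Longrightarrow> g $ 0 = 0 \<Longrightarrow> av z < 1 \<Longrightarrow> av (ps_eval av g z) \<le> av z"
  using av_ps_eval_minus_partial_sum_le[of g z 1] by simp

lemma ps_eval_add: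
  assumes "integral_fps a" "integral_fps b" "av z < 1"
  shows "ps_eval av (a + b) z = ps_eval av a z + ps_eval av b z"
proof (rule ps_eval_eqI)
  have "(\<lambda>N. av (partial_sum (a + b) z N - (ps_eval av a z + ps_eval av b z))) =
      (\<lambda>N. av ((partial_sum a z N - ps_eval av a z) + (partial_sum b z N - ps_eval av b z)))"
    by (rule ext) (simp add: sum.distrib algebra_simps)
  then show "(\<lambda>N. av (partial_sum (a + b) z N - (ps_eval av a z + ps_eval av b z))) \<longlonglongrightarrow> 0"
    using av_tendsto_0_add[OF ps_eval_tendsto[OF assms(1,3)] ps_eval_tendsto[OF assms(2,3)]] by simp
qed

lemma ps_eval_cmult:
  assumes "integral_fps a" "av z < 1"
  shows "ps_eval av (fps_const c * a) z = c * ps_eval av a z"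
proof (rule ps_eval_eqI)
  have "partial_sum (fps_const c * a) z N - c * ps_eval av a z = c * (partial_sum a z N - ps_eval av a z)" for N
    by (simp add: sum_distrib_left algebra_simps)
  then show "(\<lambda>N. av (partial_sum (fps_const c * a) z N - c * ps_eval av a z)) \<longlonglongrightarrow> 0"
    using av_tendsto_0_cmult[OF ps_eval_tendsto[OF assms]] by simp
qed

lemma ps_eval_diff:
  assumes "integral_fps a" "integral_fps b" "av z < 1"
  shows "ps_eval av (a - b) z = ps_eval av a z - ps_eval av b z"
proof -
  have b': "integral_fps (fps_const (- 1) * b)"
    by (intro integral_fps_mult integral_fps_const assms) simp
  have "a - b = a + fps_const (- 1) * b"
    by (simp add: fps_const_neg[symmetric])
  then have "ps_eval av (a - b) z = ps_eval av (a + fps_const (- 1) * b) z"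
    by (simp only:)
  also have "\<dots> = ps_eval av a z + ps_eval av (fps_const (- 1) * b) z"
    by (rule ps_eval_add[OF assms(1) b' assms(3)])
  finally show ?thesis
    using ps_eval_cmult[OF assms(2,3), of "- 1"] by simp
qed

lemma ps_eval_eq_nth_0_plus_shift:
  assumes g: "integral_fps g" and z: "av z < 1"
  shows "ps_eval av g z = g $ 0 + z * ps_eval av (fps_shift 1 g) z"
proof (rule ps_eval_eqI)
  let ?y = "ps_eval av (fps_shift 1 g) z"
  have split: "partial_sum g z (Suc N) = g $ 0 + z * partial_sum (fps_shift 1 g) z N" for N
    by (subst sum.lessThan_Suc_shift) (simp add: sum_distrib_left mult.assoc mult.left_commute)
  have eq: "(\<lambda>N. av (partial_sum g z (Suc N) - (g $ 0 + z * ?y))) =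
      (\<lambda>N. av (z * (partial_sum (fps_shift 1 g) z N - ?y)))"
    unfolding split by (simp add: algebra_simps)
  have "(\<lambda>N. av (partial_sum g z (Suc N) - (g $ 0 + z * ?y))) \<longlonglongrightarrow> 0"
    unfolding eq by (rule av_tendsto_0_cmult[OF ps_eval_tendsto[OF integral_fps_shift[OF g] z]])
  then show "(\<lambda>N. av (partial_sum g z N - (g $ 0 + z * ?y))) \<longlonglongrightarrow> 0"
    by (rule LIMSEQ_imp_Suc)
qed

lemma ps_eval_X_mult:
  assumes "integral_fps h" "av z < 1"
  shows "ps_eval av (fps_X * h) z = z * ps_eval av h z"
proof -
  have "fps_shift 1 (fps_X * h) = h"
    by (metis fps_shift_times_fps_X' mult.commute)
  then show ?thesis
    using ps_eval_eq_nth_0_plus_shift[OF integral_fps_mult[OF integral_fps_X assms(1)] assms(2)] by simp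
qed

lemma ps_eval_mult:
  assumes b: "integral_fps b" and z: "av z < 1"
  shows "integral_fps a \<Longrightarrow> ps_eval av (a * b) z = ps_eval av a z * ps_eval av b z"
proof -
  define D where "D a = ps_eval av (a * b) z - ps_eval av a z * ps_eval av b z" for a
  have D_shift: "D a = z * D (fps_shift 1 a)" if a: "integral_fps a" for a
  proof -
    let ?a' = "fps_shift 1 a"
    have "a * b = fps_const (a $ 0) * b + fps_X * (?a' * b)"
      by (subst fps_eq_const_plus_X_mult_shift[of a]) (simp add: algebra_simps)
    moreover have "integral_fps (fps_const (a $ 0) * b)" "integral_fps (?a' * b)"
      using a b by (auto intro!: integral_fps_mult integral_fps_const integral_fps_shift integral_fpsD)
    ultimately have "ps_eval av (a * b) z = a $ 0 * ps_eval av b z + z * ps_eval av (?a' * b) z"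
      using ps_eval_add[OF _ integral_fps_mult[OF integral_fps_X] z] ps_eval_cmult[OF b z]
        ps_eval_X_mult[OF _ z] by simp
    then show ?thesis
      using ps_eval_eq_nth_0_plus_shift[OF a z] unfolding D_def by (simp add: algebra_simps)
  qed
  have "av (D a) \<le> av z ^ n" if "integral_fps a" for a n
    using that
  proof (induction n arbitrary: a)
    case 0
    have "av (ps_eval av (a * b) z) \<le> 1"
      using av_ps_eval_le_1[OF integral_fps_mult[OF 0 b] z] .
    moreover have "av (ps_eval av a z * ps_eval av b z) \<le> 1"
      using av_ps_eval_le_1[OF 0 z] av_ps_eval_le_1[OF b z] by (simp add: mult_le_one)
    ultimately show ?case
      unfolding D_def using av_diff_le[of "ps_eval av (a * b) z" "ps_eval av a z * ps_eval av b z"]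
      by simp
  next
    case (Suc n)
    then show ?case
      using D_shift[OF Suc.prems] Suc.IH[OF integral_fps_shift] by (simp add: mult_left_mono)
  qed
  then have "integral_fps a \<Longrightarrow> av (D a) \<le> 0"
    using LIMSEQ_le_const[OF LIMSEQ_power_zero[of "av z"]] z by auto
  then have "integral_fps a \<Longrightarrow> D a = 0"
    using av_nonneg[of "D a"] av_eq_0_iff[of "D a"] by linarith
  then show "integral_fps a \<Longrightarrow> ?thesis"
    by (simp add: D_def)
qed

lemma ps_eval_power:
  assumes "integral_fps a" "av z < 1"
  shows "ps_eval av (a ^ n) z = ps_eval av a z ^ n"
  by (induction n) (simp_all add: ps_eval_1 ps_eval_mult assms integral_fps_power)

lemma ps_eval_compose:
  assumes g: "integral_fps g" and f: "integral_fps f" "f $ 0 = 0" and z: "av z < 1"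
  shows "ps_eval av (g oo f) z = ps_eval av g (ps_eval av f z)"
proof (rule ps_eval_eqI)
  define y where "y = ps_eval av f z"
  have y: "av y < 1"
    using av_ps_eval_le[OF f z] z unfolding y_def by linarith
  have regroup: "partial_sum (g oo f) z N = (\<Sum>i<N. g $ i * partial_sum (f ^ i) z N)" for N
  proof -
    have "partial_sum (g oo f) z N = (\<Sum>n<N. \<Sum>i\<in>{0..n}. g $ i * (f ^ i) $ n * z ^ n)"
      by (simp add: fps_compose_nth sum_distrib_right)
    also have "\<dots> = (\<Sum>n<N. \<Sum>i<N. g $ i * (f ^ i) $ n * z ^ n)"
      using startsby_zero_power_prefix[OF f(2)]
      by (intro sum.cong refl sum.mono_neutral_left) auto
    also have "\<dots> = (\<Sum>i<N. g $ i * partial_sum (f ^ i) z N)"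
      by (subst sum.swap) (simp add: sum_distrib_left mult.assoc)
    finally show ?thesis .
  qed
  have "av (partial_sum (g oo f) z N - partial_sum g y N) \<le> av z ^ N" for N
  proof -
    have "partial_sum (g oo f) z N - partial_sum g y N =
        (\<Sum>i<N. g $ i * (partial_sum (f ^ i) z N - ps_eval av (f ^ i) z))"
      unfolding regroup ps_eval_power[OF f(1) z] y_def by (simp add: sum_subtractf algebra_simps)
    also have "av \<dots> \<le> av z ^ N"
    proof (rule av_sum_le)
      fix i
      have "av (partial_sum (f ^ i) z N - ps_eval av (f ^ i) z) \<le> av z ^ N"
        using av_ps_eval_minus_partial_sum_le[OF integral_fps_power[OF f(1)] z] av_diff_commute by metis
      then show "av (g $ i * (partial_sum (f ^ i) z N - ps_eval av (f ^ i) z)) \<le> av z ^ N"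
        using integral_fpsD[OF g, of i] mult_mono[of "av (g $ i)" 1] by simp
    qed simp
    finally show ?thesis .
  qed
  then have "(\<lambda>N. av (partial_sum (g oo f) z N - partial_sum g y N)) \<longlonglongrightarrow> 0"
    by (rule av_tendsto_0_le) (rule LIMSEQ_power_zero, use z in simp)
  from av_tendsto_0_add[OF this ps_eval_tendsto[OF g y]]
  show "(\<lambda>N. av (partial_sum (g oo f) z N - ps_eval av g (ps_eval av f z))) \<longlonglongrightarrow> 0"
    unfolding y_def by simp
qed

lemma ps_eval_fps_iter:
  assumes f: "integral_fps f" "f $ 0 = 0"
  shows "av w < 1 \<Longrightarrow> ps_eval av (fps_iter f n) w = (ps_eval av f ^^ n) w"
proof (induction n arbitrary: w)
  case 0
  then show ?case
    by (simp add: ps_eval_X)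
next
  case (Suc n)
  have "av (ps_eval av f w) < 1"
    using av_ps_eval_le[OF f Suc.prems] Suc.prems by linarith
  then have "ps_eval av (fps_iter f (Suc n)) w = (ps_eval av f ^^ n) (ps_eval av f w)"
    using ps_eval_compose[OF integral_fps_iter[OF f(1)] f Suc.prems] Suc.IH
    by (simp add: fps_iter_Suc)
  then show ?case
    by (simp only: funpow_Suc_right comp_def)
qed

lemma ps_eval_fps_iter_minus_X:
  assumes "integral_fps f" "f $ 0 = 0" "av w < 1"
  shows "ps_eval av (fps_iter f n - fps_X) w = (ps_eval av f ^^ n) w - w"
  using ps_eval_diff[OF integral_fps_iter[OF assms(1)] integral_fps_X assms(3)]
    ps_eval_fps_iter[OF assms] ps_eval_X by simp

lemma av_ps_eval_isometry:
  assumes f: "integral_fps f" "f $ 0 = 0" "av (f $ 1) = 1" and w: "av w < 1"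
  shows "av (ps_eval av f w) = av w"
proof (cases "w = 0")
  case True
  then show ?thesis
    using f(2) by (simp add: ps_eval_at_0)
next
  case False
  have "av (ps_eval av f w - f $ 1 * w) \<le> av w ^ 2"
    using av_ps_eval_minus_partial_sum_le[OF f(1) w, of 2] f(2) by (simp add: numeral_2_eq_2)
  also have "\<dots> < av (f $ 1 * w)"
    using False w f(3) by (simp add: power2_eq_square)
  finally show ?thesis
    using av_add_eq_dominant[of "ps_eval av f w - f $ 1 * w" "f $ 1 * w"] f(3) by simp
qed

section \<open>Factoring out zeros in the open unit disc\<close>

lemma ps_eval_X_minus_const: "av z < 1 \<Longrightarrow> av c \<le> 1 \<Longrightarrow> ps_eval av (fps_X - fps_const c) z = z - c"
  using ps_eval_diff[OF integral_fps_X integral_fps_const[of c], of z] ps_eval_X ps_eval_const by simp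

lemma integral_fps_factor_root:
  assumes g: "integral_fps g" and c: "av c < 1" and root: "ps_eval av g c = 0"
  obtains g1 where "integral_fps g1" "g = (fps_X - fps_const c) * g1"
proof -
  define g1 where "g1 = Abs_fps (\<lambda>k. ps_eval av (fps_shift (Suc k) g) c)"
  have g1_nth: "g1 $ k = ps_eval av (fps_shift (Suc k) g) c" for k
    by (simp add: g1_def)
  have "integral_fps g1"
    unfolding integral_fps_def g1_nth using av_ps_eval_le_1[OF integral_fps_shift[OF g] c] by simp
  have tail: "ps_eval av (fps_shift k g) c = g $ k + c * g1 $ k" for k
    using ps_eval_eq_nth_0_plus_shift[OF integral_fps_shift[OF g] c, of k]
      fps_shift_fps_shift[of 1 k g] by (simp add: g1_nth)
  have "g $ n = ((fps_X - fps_const c) * g1) $ n" for n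
  proof (cases n)
    case 0
    then show ?thesis
      using tail[of 0] root by (simp add: add_eq_0_iff2)
  next
    case (Suc k)
    then show ?thesis
      using tail[of n] g1_nth[of k] by (simp add: algebra_simps)
  qed
  then show thesis
    using that \<open>integral_fps g1\<close> fps_ext by blast
qed

definition linear_factors :: "'a set \<Rightarrow> 'a fps" where
  "linear_factors S = (\<Prod>c\<in>S. fps_X - fps_const c)"

lemma linear_factors_insert:
  "finite S \<Longrightarrow> c \<notin> S \<Longrightarrow> linear_factors (insert c S) = (fps_X - fps_const c) * linear_factors S"
  by (simp add: linear_factors_def)

lemma integral_fps_linear_factors: "(\<And>c. c \<in> S \<Longrightarrow> av c < 1) \<Longrightarrow> integral_fps (linear_factors S)"
proof (induction S rule: infinite_finite_induct)
  case (insert c S)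
  then show ?case
    by (simp add: linear_factors_insert integral_fps_mult integral_fps_X_minus_const less_imp_le)
qed (simp_all add: linear_factors_def)

lemma linear_factors_nth_0: "linear_factors S $ 0 = (\<Prod>c\<in>S. - c)"
  unfolding linear_factors_def by (induction S rule: infinite_finite_induct) auto

lemma ps_eval_linear_factors:
  "finite S \<Longrightarrow> (\<And>c. c \<in> S \<Longrightarrow> av c < 1) \<Longrightarrow> av z < 1 \<Longrightarrow>
    ps_eval av (linear_factors S) z = (\<Prod>c\<in>S. z - c)"
proof (induction S rule: finite_induct)
  case (insert c S)
  have c: "av c \<le> 1"
    using insert.prems(1) by (simp add: less_imp_le)
  have "ps_eval av (linear_factors (insert c S)) z = (z - c) * ps_eval av (linear_factors S) z"
    using ps_eval_mult[OF integral_fps_linear_factors insert.prems(2) integral_fps_X_minus_const[OF c]]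
      ps_eval_X_minus_const[OF insert.prems(2) c] insert.prems(1) insert.hyps
    by (simp add: linear_factors_insert)
  then show ?case
    using insert by simp
qed (simp add: ps_eval_1 linear_factors_def)

lemma integral_fps_factor_roots:
  "finite S \<Longrightarrow> (\<And>c. c \<in> S \<Longrightarrow> av c < 1) \<Longrightarrow> (\<And>c. c \<in> S \<Longrightarrow> ps_eval av g c = 0) \<Longrightarrow>
    integral_fps g \<Longrightarrow> \<exists>G. integral_fps G \<and> g = linear_factors S * G"
proof (induction S arbitrary: g rule: finite_induct)
  case empty
  then show ?case
    by (auto simp: linear_factors_def)
next
  case (insert x F)
  obtain g1 where g1: "integral_fps g1" "g = (fps_X - fps_const x) * g1"
    using integral_fps_factor_root[OF insert.prems(3)] insert.prems(1,2) by blast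
  have x: "av x \<le> 1"
    using insert.prems(1) by (simp add: less_imp_le)
  have "ps_eval av g1 c = 0" if c: "c \<in> F" for c
  proof -
    have c_disc: "av c < 1"
      using insert.prems(1) c by simp
    have "0 = ps_eval av g c"
      using insert.prems(2) c by simp
    also have "\<dots> = (c - x) * ps_eval av g1 c"
      unfolding g1(2) using ps_eval_mult[OF g1(1) c_disc integral_fps_X_minus_const[OF x]]
        ps_eval_X_minus_const[OF c_disc x] by simp
    finally show ?thesis
      using insert.hyps(2) c by auto
  qed
  then obtain G where G: "integral_fps G" "g1 = linear_factors F * G"
    using insert.IH[OF _ _ g1(1)] insert.prems(1) by blast
  then have "g = linear_factors (insert x F) * G"
    using g1(2) by (simp only: linear_factors_insert[OF insert.hyps] mult.assoc)
  with G(1) show ?case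
    by blast
qed

lemma has_wideg_linear_factors_mult:
  "finite S \<Longrightarrow> (\<And>c. c \<in> S \<Longrightarrow> av c < 1) \<Longrightarrow> integral_fps G \<Longrightarrow>
    has_wideg (linear_factors S * G) (card S + d) \<longleftrightarrow> has_wideg G d"
proof (induction S rule: finite_induct)
  case (insert x F)
  have "integral_fps (linear_factors F * G)"
    using insert.prems by (intro integral_fps_mult integral_fps_linear_factors) auto
  then have "has_wideg ((fps_X - fps_const x) * (linear_factors F * G)) (Suc (card F + d)) \<longleftrightarrow> has_wideg G d"
    using has_wideg_X_minus_const_mult[of "linear_factors F * G" x "card F + d"] insert by simp
  then show ?case
    using insert.hyps by (simp add: linear_factors_insert mult.assoc)
qed (simp add: linear_factors_def)

lemma ps_eval_nonzero_if_unit: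
  assumes "integral_fps G" "av (G $ 0) = 1" "av z < 1"
  shows "ps_eval av G z \<noteq> 0"
  using av_ps_eval_minus_partial_sum_le[OF assms(1,3), of 1] assms(2,3) by auto

text \<open>
  Dividing out the zeros in S leaves an integral G with |h(0)| = r^|S| |G(0)|; equality in the
  bound means that G(0) is a unit, so G has no zeros left in the disc.
\<close>

lemma zeros_on_circle:
  assumes S: "finite S" "\<And>c. c \<in> S \<Longrightarrow> av c = r" and r: "0 < r" "r < 1"
    and h: "integral_fps h" and root: "\<And>c. c \<in> S \<Longrightarrow> ps_eval av h c = 0"
  shows "av (h $ 0) \<le> r ^ card S"
    and "av (h $ 0) = r ^ card S \<longleftrightarrow> has_wideg h (card S)"
    and "av (h $ 0) = r ^ card S \<Longrightarrow> av z < 1 \<Longrightarrow> ps_eval av h z = 0 \<Longrightarrow> z \<in> S"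
proof -
  have disc: "\<And>c. c \<in> S \<Longrightarrow> av c < 1"
    using S(2) r(2) by simp
  obtain G where G: "integral_fps G" "h = linear_factors S * G"
    using integral_fps_factor_roots[OF S(1) disc root h] by blast
  have "av (h $ 0) = (\<Prod>c\<in>S. av c) * av (G $ 0)"
    using G(2) linear_factors_nth_0[of S] by (simp add: av_prod)
  then have h0: "av (h $ 0) = r ^ card S * av (G $ 0)"
    using S by simp
  then show "av (h $ 0) \<le> r ^ card S"
    using integral_fpsD[OF G(1), of 0] r by (simp add: mult_left_le)
  have unit_iff: "av (h $ 0) = r ^ card S \<longleftrightarrow> av (G $ 0) = 1"
    using h0 r by auto
  also have "\<dots> \<longleftrightarrow> has_wideg G 0"
    by (simp add: has_wideg_def)
  also have "\<dots> \<longleftrightarrow> has_wideg h (card S)"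
    using has_wideg_linear_factors_mult[OF S(1) disc G(1), of 0] G(2) by simp
  finally show "av (h $ 0) = r ^ card S \<longleftrightarrow> has_wideg h (card S)" .
  assume "av (h $ 0) = r ^ card S" and z: "av z < 1" "ps_eval av h z = 0"
  then have "(\<Prod>c\<in>S. z - c) * ps_eval av G z = 0"
    using ps_eval_mult[OF G(1) z(1) integral_fps_linear_factors[OF disc]]
      ps_eval_linear_factors[OF S(1) disc z(1)] G(2) by simp
  then show "z \<in> S"
    using ps_eval_nonzero_if_unit[OF G(1) _ z(1)] unit_iff \<open>av (h $ 0) = r ^ card S\<close> S(1) by auto
qed

section \<open>Divisibility of iterates\<close>

lemma compose_minus_self_factor:
  assumes u: "integral_fps u" "u $ 0 = 0" and B: "integral_fps B"
  obtains E where "integral_fps E" "(B oo u) - B = (u - fps_X) * E"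
proof
  define D where "D j = (\<Sum>i<j. fps_X ^ (j - Suc i) * u ^ i)" for j
  have D_factor: "u ^ j - fps_X ^ j = (u - fps_X) * D j" for j
    unfolding D_def by (rule power_diff_sumr2)
  have D_nth: "D j $ k = 0" if "Suc k < j" for j k
  proof -
    have "(fps_X ^ (j - Suc i) * u ^ i) $ k = 0" if "i < j" for i
    proof (cases "k < j - Suc i")
      case False
      then have "k - (j - Suc i) < i"
        using \<open>Suc k < j\<close> that by linarith
      then show ?thesis
        using False startsby_zero_power_prefix[OF u(2)] by (simp add: fps_X_power_mult_nth)
    qed (simp add: fps_X_power_mult_nth)
    then show ?thesis
      unfolding D_def fps_sum_nth by simp
  qed
  have integral_D: "integral_fps (D j)" for j
    unfolding integral_fps_def D_def fps_sum_nth
    by (intro allI av_sum_le) (auto intro!: integral_fpsD integral_fps_mult integral_fps_power u(1))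
  \<comment> \<open>E = \<Sum>j B_j D_j, a well-defined series since D_j has no coefficient below j - 1\<close>
  define E_up_to where "E_up_to n = (\<Sum>j<n. fps_const (B $ j) * D j)" for n
  define E where "E = Abs_fps (\<lambda>k. E_up_to (k + 2) $ k)"
  have E_up_to_nth: "E_up_to n $ k = (\<Sum>j<k+2. B $ j * D j $ k)" if "k + 2 \<le> n" for k n
  proof -
    have "E_up_to n $ k = (\<Sum>j<n. B $ j * D j $ k)"
      unfolding E_up_to_def fps_sum_nth by simp
    also have "\<dots> = (\<Sum>j<k+2. B $ j * D j $ k)"
      by (rule sum.mono_neutral_right) (use that D_nth in auto)
    finally show ?thesis .
  qed
  have E_nth: "E $ k = E_up_to n $ k" if "k + 2 \<le> n" for k n
    using E_up_to_nth[OF that] E_up_to_nth[of k "k + 2"] by (simp add: E_def)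
  show "integral_fps E"
    unfolding integral_fps_def
  proof
    fix k
    have "av (\<Sum>j<k+2. B $ j * D j $ k) \<le> 1"
      by (rule av_sum_le) (auto intro!: mult_le_one integral_fpsD[OF B] integral_fpsD[OF integral_D])
    then show "av (E $ k) \<le> 1"
      using E_nth[of k "k + 2"] E_up_to_nth[of k "k + 2"] by simp
  qed
  show "(B oo u) - B = (u - fps_X) * E"
  proof (rule fps_ext)
    fix n
    have "((u - fps_X) * E) $ n = ((u - fps_X) * E_up_to (n + 2)) $ n"
      unfolding fps_mult_nth by (intro sum.cong refl) (simp add: E_nth)
    also have "(u - fps_X) * E_up_to (n + 2) = (\<Sum>j<n+2. fps_const (B $ j) * (u ^ j - fps_X ^ j))"
      unfolding E_up_to_def D_factor by (simp add: sum_distrib_left algebra_simps)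
    also have "\<dots> $ n = (\<Sum>j<n+2. B $ j * (u ^ j) $ n) - (\<Sum>j<n+2. B $ j * (fps_X ^ j) $ n)"
      unfolding fps_sum_nth by (simp add: algebra_simps sum_subtractf)
    also have "(\<Sum>j<n+2. B $ j * (u ^ j) $ n) = (B oo u) $ n"
      unfolding fps_compose_nth
      by (rule sum.mono_neutral_right) (auto simp: startsby_zero_power_prefix[OF u(2)])
    also have "(\<Sum>j<n+2. B $ j * (fps_X ^ j) $ n) = B $ n"
      by (subst sum.cong[OF refl, of _ _ "\<lambda>j. if j = n then B $ n else 0"]) auto
    finally show "((B oo u) - B) $ n = ((u - fps_X) * E) $ n"
      by simp
  qed
qed

lemma fps_iter_minus_X_factor:
  assumes u: "integral_fps u" "u $ 0 = 0"
  shows "\<exists>c. integral_fps c \<and> fps_iter u k - fps_X = (u - fps_X) * c"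
proof (induction k)
  case 0
  show ?case
    by (intro exI[of _ 0]) simp
next
  case (Suc k)
  then obtain c where c: "integral_fps c" "fps_iter u k - fps_X = (u - fps_X) * c"
    by blast
  obtain E where E: "integral_fps E" "((u - fps_X) oo u) - (u - fps_X) = (u - fps_X) * E"
    using compose_minus_self_factor[OF u integral_fps_diff[OF u(1) integral_fps_X]] by blast
  have "fps_iter u (Suc k) - fps_X = ((fps_iter u k - fps_X) oo u) + (u - fps_X)"
    using u(2) by (simp add: fps_iter_Suc fps_compose_sub_distrib)
  also have "\<dots> = ((u - fps_X) oo u) * (c oo u) + (u - fps_X)"
    unfolding c(2) by (simp add: fps_compose_mult_distrib[OF u(2)])
  also have "(u - fps_X) oo u = (u - fps_X) * (1 + E)"
    using E(2) by (simp add: algebra_simps)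
  finally have "fps_iter u (Suc k) - fps_X = (u - fps_X) * ((1 + E) * (c oo u) + 1)"
    by (simp add: algebra_simps)
  then show ?case
    by (intro exI[of _ "(1 + E) * (c oo u) + 1"] conjI integral_fps_add integral_fps_mult
        integral_fps_compose c(1) u(1) E(1) integral_fps_1)
qed

lemma fps_iter_minus_X_dvd:
  assumes f: "integral_fps f" "f $ 0 = 0" and "M dvd N"
  obtains c where "integral_fps c" "fps_iter f N - fps_X = (fps_iter f M - fps_X) * c"
proof -
  obtain k where "N = M * k"
    using assms(3) by blast
  then have "fps_iter f N = fps_iter (fps_iter f M) k"
    using fps_iter_mult[OF f(2)] by simp
  then show thesis
    using that fps_iter_minus_X_factor[OF integral_fps_iter[OF f(1)] fps_iter_nth_0[OF f(2)], of M k]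
    by auto
qed

section \<open>Cycles of periodic points\<close>

lemma funpow_ne_in_orbit:
  assumes "(F ^^ N) w = w" "(F ^^ M) w \<noteq> w" "k \<le> N"
  shows "(F ^^ M) ((F ^^ k) w) \<noteq> (F ^^ k) w"
proof
  assume "(F ^^ M) ((F ^^ k) w) = (F ^^ k) w"
  then have "(F ^^ (N - k)) ((F ^^ M) ((F ^^ k) w)) = (F ^^ (N - k)) ((F ^^ k) w)"
    by simp
  then have "(F ^^ M) ((F ^^ (N - k + k)) w) = (F ^^ (N - k + k)) w"
    by (metis funpow_add comp_apply add.commute)
  with assms show False
    by simp
qed

lemma cycle_of_eq_image:
  assumes "min_periodic av f w N"
  shows "cycle_of av f w = (\<lambda>k. (ps_eval av f ^^ k) w) ` {..<N}"
proof -
  let ?F = "ps_eval av f"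
  have "(?F ^^ N) w = w" "0 < N"
    using assms unfolding min_periodic_def by auto
  then have "(?F ^^ k) w = (?F ^^ (k mod N)) w" "k mod N < N" for k
    using funpow_mod_eq[where f = ?F and n = N and x = w and m = k] by auto
  then show ?thesis
    unfolding cycle_of_def by (auto intro: image_eqI)
qed

lemma card_cycle_of:
  assumes w: "min_periodic av f w N"
  shows "card (cycle_of av f w) = N"
proof -
  let ?F = "ps_eval av f"
  have neq: "(?F ^^ i) w \<noteq> (?F ^^ j) w" if "i < j" "j < N" for i j
  proof -
    have "(?F ^^ (j - i)) ((?F ^^ i) w) \<noteq> (?F ^^ i) w"
      using w that funpow_ne_in_orbit[where F = ?F and N = N and w = w and M = "j - i" and k = i]
      unfolding min_periodic_def by auto
    moreover have "(?F ^^ (j - i)) ((?F ^^ i) w) = (?F ^^ (j - i + i)) w"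
      by (simp add: funpow_add)
    moreover have "j - i + i = j"
      using that by simp
    ultimately show ?thesis
      by simp
  qed
  have "inj_on (\<lambda>k. (?F ^^ k) w) {..<N}"
  proof (rule inj_onI)
    fix i j
    assume "i \<in> {..<N}" "j \<in> {..<N}" "(?F ^^ i) w = (?F ^^ j) w"
    then show "i = j"
      using neq[of i j] neq[of j i] by (cases i j rule: linorder_cases) auto
  qed
  then show ?thesis
    using cycle_of_eq_image[OF w] by (simp add: card_image)
qed

lemma av_cycle_of:
  assumes f: "integral_fps f" "f $ 0 = 0" "av (f $ 1) = 1" and w: "av w < 1"
  shows "c \<in> cycle_of av f w \<Longrightarrow> av c = av w"
proof -
  have "av ((ps_eval av f ^^ k) w) = av w" for k
    by (induction k) (use av_ps_eval_isometry[OF f] w in auto)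
  then show "c \<in> cycle_of av f w \<Longrightarrow> av c = av w"
    unfolding cycle_of_def by auto
qed

lemma min_periodic_cycle_of:
  assumes f: "integral_fps f" "f $ 0 = 0" "av (f $ 1) = 1" and w: "min_periodic av f w N"
    and c: "c \<in> cycle_of av f w"
  shows "min_periodic av f c N"
proof -
  let ?F = "ps_eval av f"
  obtain k where k: "k < N" "c = (?F ^^ k) w"
    using c cycle_of_eq_image[OF w] by auto
  have "(?F ^^ N) c = (?F ^^ k) ((?F ^^ N) w)"
    using k(2) by (metis funpow_add comp_apply add.commute)
  then have "(?F ^^ N) c = c"
    using w k(2) unfolding min_periodic_def by simp
  moreover have "av c < 1"
    using av_cycle_of[OF f _ c] w unfolding min_periodic_def by simp
  moreover have "(?F ^^ M) c \<noteq> c" if "0 < M" "M < N" for M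
    using funpow_ne_in_orbit[where F = ?F and N = N and w = w and M = M and k = k] w that k
    unfolding min_periodic_def by auto
  ultimately show ?thesis
    using w unfolding min_periodic_def by blast
qed

lemma min_periodic_nonzero:
  assumes "f $ 0 = 0" "min_periodic av f w N" "2 \<le> N"
  shows "w \<noteq> 0"
proof
  assume "w = 0"
  then have "(ps_eval av f ^^ 1) w = w"
    using assms(1) by (simp add: ps_eval_at_0)
  with assms(2,3) show False
    unfolding min_periodic_def by auto
qed

lemma periodic_cycle_bound:
  assumes f: "integral_fps f" "f $ 0 = 0" "av (f $ 1) = 1"
    and w0: "min_periodic av f w0 N" "w0 \<noteq> 0"
    and h: "integral_fps h" "h $ 0 \<noteq> 0"
    and root: "\<And>w. min_periodic av f w N \<Longrightarrow> w \<noteq> 0 \<Longrightarrow> ps_eval av h w = 0"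
  defines "r \<equiv> av (h $ 0) powr (1 / real N)"
  shows "r \<le> av w0"
    and "av w0 = r \<longleftrightarrow> has_wideg h N"
    and "av w0 = r \<Longrightarrow> min_periodic av f w N \<Longrightarrow> w \<noteq> 0 \<Longrightarrow> w \<in> cycle_of av f w0"
    and "av w0 = r \<Longrightarrow> w' \<in> cycle_of av f w0 \<Longrightarrow> av w' = r"
proof -
  let ?C = "cycle_of av f w0"
  have N: "0 < N" and disc: "av w0 < 1"
    using w0(1) unfolding min_periodic_def by auto
  have C: "finite ?C" "card ?C = N"
    using cycle_of_eq_image[OF w0(1)] card_cycle_of[OF w0(1)] by simp_all
  have circle: "c \<in> ?C \<Longrightarrow> av c = av w0" for c
    using av_cycle_of[OF f disc] .
  have "c \<in> ?C \<Longrightarrow> ps_eval av h c = 0" for c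
    using root[OF min_periodic_cycle_of[OF f w0(1)]] circle w0(2) by fastforce
  note zeros = zeros_on_circle[OF C(1) circle _ disc h(1) this, unfolded C(2)]
  have r_eq_iff: "av w0 = r \<longleftrightarrow> av (h $ 0) = av w0 ^ N"
    unfolding r_def using powr_inverse_eq_iff[of "av w0" N "av (h $ 0)"] w0(2) N by simp
  have "r \<le> (av w0 ^ N) powr (1 / real N)"
    unfolding r_def using zeros(1) w0(2) by (intro powr_mono2) auto
  also have "\<dots> = av w0"
    using powr_inverse_eq_iff[of "av w0" N "av w0 ^ N"] w0(2) N by simp
  finally show "r \<le> av w0" .
  show "av w0 = r \<longleftrightarrow> has_wideg h N"
    using zeros(2) w0(2) r_eq_iff by simp
  show "av w0 = r \<Longrightarrow> min_periodic av f w N \<Longrightarrow> w \<noteq> 0 \<Longrightarrow> w \<in> ?C"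
    using zeros(3) w0(2) r_eq_iff root unfolding min_periodic_def by simp
  show "av w0 = r \<Longrightarrow> w' \<in> ?C \<Longrightarrow> av w' = r"
    using circle by simp
qed

lemma cycle_bound_fps_iter:
  assumes f: "integral_fps f" "f $ 0 = 0" "f $ 1 = lam" "av lam = 1"
    and lam: "lam ^ N \<noteq> 1" and w0: "min_periodic av f w0 N" "w0 \<noteq> 0"
  defines "r \<equiv> av (lam ^ N - 1) powr (1 / real N)"
  shows "r \<le> av w0 \<and> (av w0 = r \<longleftrightarrow> wideg av (fps_iter f N - fps_X) = enat (N + 1)) \<and>
    (av w0 = r \<longrightarrow> (\<forall>w. min_periodic av f w N \<and> w \<noteq> 0 \<longrightarrow> w \<in> cycle_of av f w0) \<and>
      (\<forall>w' \<in> cycle_of av f w0. av w' = r))"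
proof -
  define g where "g = fps_iter f N - fps_X"
  define h where "h = fps_shift 1 g"
  have g: "integral_fps g" "g $ 0 = 0"
    unfolding g_def using f by (simp_all add: integral_fps_diff integral_fps_iter fps_iter_nth_0)
  have h0: "h $ 0 = lam ^ N - 1"
    unfolding h_def g_def using fps_iter_nth_1[OF f(2), of N] f(3) by simp
  have root: "ps_eval av h w = 0" if "min_periodic av f w N" "w \<noteq> 0" for w
  proof -
    have "w * ps_eval av h w = ps_eval av g w"
      using ps_eval_eq_nth_0_plus_shift[OF g(1)] g(2) that(1) unfolding h_def min_periodic_def by simp
    also have "\<dots> = 0"
      unfolding g_def using ps_eval_fps_iter_minus_X[OF f(1,2)] that(1) unfolding min_periodic_def by simp
    finally show ?thesis
      using that(2) by simp
  qed
  have h: "integral_fps h" "h $ 0 \<noteq> 0"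
    using integral_fps_shift[OF g(1)] h0 lam unfolding h_def by simp_all
  have "av (f $ 1) = 1"
    using f(3,4) by simp
  note bound = periodic_cycle_bound[OF f(1,2) this w0 h root, unfolded h0, folded r_def]
  have "wideg av (fps_iter f N - fps_X) = enat (N + 1) \<longleftrightarrow> has_wideg h N"
    using wideg_eq_enat_iff[OF g(1), of "N + 1"] has_wideg_Suc_iff_shift[of g N] g(2)
    unfolding g_def h_def by simp
  then show ?thesis
    using bound by blast
qed

lemma cycle_bound_fps_iter_quotient:
  assumes f: "integral_fps f" "f $ 0 = 0" "f $ 1 = lam" "av lam = 1"
    and lam: "lam ^ N \<noteq> 1" and M: "M dvd N" "0 < M" "M < N" and z0: "min_periodic av f z0 N"
  defines "r \<equiv> av ((lam ^ N - 1) / (lam ^ M - 1)) powr (1 / real N)"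
  shows "r \<le> av z0 \<and>
    (av z0 = r \<longleftrightarrow> wideg av ((fps_iter f N - fps_X) / (fps_iter f M - fps_X)) = enat N) \<and>
    (av z0 = r \<longrightarrow> (\<forall>z. min_periodic av f z N \<longrightarrow> z \<in> cycle_of av f z0) \<and>
      (\<forall>z' \<in> cycle_of av f z0. av z' = r))"
proof -
  obtain c where c: "integral_fps c" "fps_iter f N - fps_X = (fps_iter f M - fps_X) * c"
    using fps_iter_minus_X_dvd[OF f(1,2) M(1)] by blast
  have lam_M: "lam ^ M - 1 \<noteq> 0"
    using lam M(1) by (auto simp: power_mult elim!: dvdE)
  have "(fps_iter f N - fps_X) $ 1 = (fps_iter f M - fps_X) $ 1 * c $ 0"
    unfolding c(2) fps_mult_nth using fps_iter_nth_0[OF f(2)] by simp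
  then have c0: "c $ 0 = (lam ^ N - 1) / (lam ^ M - 1)"
    using fps_iter_nth_1[OF f(2)] f(3) lam_M by (simp add: eq_divide_eq mult.commute)
  have quotient: "(fps_iter f N - fps_X) / (fps_iter f M - fps_X) = c"
  proof -
    have "(fps_iter f M - fps_X) $ 1 \<noteq> 0"
      using fps_iter_nth_1[OF f(2)] f(3) lam_M by simp
    then have "fps_iter f M - fps_X \<noteq> 0"
      by auto
    then show ?thesis
      unfolding c(2) by simp
  qed
  have nonzero: "min_periodic av f z N \<Longrightarrow> z \<noteq> 0" for z
    using min_periodic_nonzero[OF f(2)] M by fastforce
  have root: "ps_eval av c z = 0" if z: "min_periodic av f z N" for z
  proof -
    have disc: "av z < 1" and "(ps_eval av f ^^ N) z = z" "(ps_eval av f ^^ M) z \<noteq> z"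
      using z M unfolding min_periodic_def by auto
    then have "ps_eval av (fps_iter f N - fps_X) z = 0"
      "ps_eval av (fps_iter f M - fps_X) z \<noteq> 0"
      using ps_eval_fps_iter_minus_X[OF f(1,2) disc] by simp_all
    then show ?thesis
      unfolding c(2) using ps_eval_mult[OF c(1) disc, of "fps_iter f M - fps_X"] f(1)
      by (simp add: integral_fps_diff integral_fps_iter)
  qed
  have "c $ 0 \<noteq> 0" "av (f $ 1) = 1"
    using c0 lam lam_M f(3,4) by simp_all
  note bound = periodic_cycle_bound[OF f(1,2) this(2) z0 nonzero[OF z0] c(1) this(1) root, unfolded c0, folded r_def]
  show ?thesis
    unfolding quotient wideg_eq_enat_iff[OF c(1)] using bound nonzero by blast
qed

end

theorem lemma2p3:
  fixes av :: "'a::field \<Rightarrow> real" and p q :: nat and lam :: 'a and f :: "'a fps"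
  assumes av: "ultrametric_abs av" and complete: "av_complete av"
    and p: "prime p" and resp: "av (of_nat p) < 1"
    and lam: "av lam = 1"
    and ord_fin: "\<exists>k>0. av (lam ^ k - 1) < 1"
    and q: "q = (LEAST k. 0 < k \<and> av (lam ^ k - 1) < 1)"
    and fO: "\<forall>i. av (fps_nth f i) \<le> 1"
    and f0: "fps_nth f 0 = 0" and f1: "fps_nth f 1 = lam"
  shows
   "(lam ^ q \<noteq> 1 \<longrightarrow>
      (\<forall>w0. min_periodic av f w0 q \<and> (q = 1 \<longrightarrow> w0 \<noteq> 0) \<longrightarrow>
         av w0 \<ge> av (lam ^ q - 1) powr (1 / real q) \<and>
         (av w0 = av (lam ^ q - 1) powr (1 / real q) \<longleftrightarrow>
            wideg av (fps_iter f q - fps_X) = enat (q + 1)) \<and>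
         (av w0 = av (lam ^ q - 1) powr (1 / real q) \<longrightarrow>
            (\<forall>w. min_periodic av f w q \<and> w \<noteq> 0 \<longrightarrow> w \<in> cycle_of av f w0) \<and>
            (\<forall>w' \<in> cycle_of av f w0. av w' = av (lam ^ q - 1) powr (1 / real q)))))
    \<and>
    (\<forall>n z0. 1 \<le> n \<and> lam ^ (q * p ^ n) \<noteq> 1 \<and> min_periodic av f z0 (q * p ^ n) \<longrightarrow>
       (let r = av ((lam ^ (q * p ^ n) - 1) / (lam ^ (q * p ^ (n - 1)) - 1))
                  powr (1 / real (q * p ^ n)) in
         av z0 \<ge> r \<and>
         (av z0 = r \<longleftrightarrow>
            wideg av ((fps_iter f (q * p ^ n) - fps_X) / (fps_iter f (q * p ^ (n - 1)) - fps_X))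
              = enat (q * p ^ n)) \<and>
         (av z0 = r \<longrightarrow>
            (\<forall>z. min_periodic av f z (q * p ^ n) \<longrightarrow> z \<in> cycle_of av f z0) \<and>
            (\<forall>z' \<in> cycle_of av f z0. av z' = r))))"
proof -
  interpret complete_ultrametric_field av
    using av complete by unfold_locales
  have f: "integral_fps f" "f $ 0 = 0" "f $ 1 = lam" "av lam = 1"
    using fO f0 f1 lam by (simp_all add: integral_fps_def)
  have nonzero: "w0 \<noteq> 0" if "min_periodic av f w0 q" "q = 1 \<longrightarrow> w0 \<noteq> 0" for w0
    using that min_periodic_nonzero[OF f(2), of w0 q] by (cases "q = 1") (auto simp: min_periodic_def)
  have periods: "q * p ^ (n - 1) dvd q * p ^ n \<and> 0 < q * p ^ (n - 1) \<and> q * p ^ (n - 1) < q * p ^ n"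
    if "1 \<le> n" "min_periodic av f z0 (q * p ^ n)" for n z0
  proof -
    have "q * p ^ n = q * p ^ (n - 1) * p" "0 < q"
      using that unfolding min_periodic_def by (auto simp flip: power_Suc2)
    moreover have "2 \<le> p"
      using p by (simp add: prime_ge_2_nat)
    ultimately show ?thesis
      by simp
  qed
  show ?thesis
    apply (rule conjI; intro allI impI)
    subgoal for w0
      by (rule cycle_bound_fps_iter[OF f]) (use nonzero in auto)
    subgoal for n z0
      unfolding Let_def by (rule cycle_bound_fps_iter_quotient[OF f]) (use periods[of n z0] in auto)
    done
qed

end
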